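(* Let $G$ be a hypo-unique domination graph. Then either $G=K_2$, or $G$ is a connected vertex domination-critical graph with $|V(G)|\geq 4$.
   Context: All graphs are finite, simple and undirected. A set $D\subseteq V(G)$ is dominating if every vertex of $G$ not in $D$ has a neighbor in $D$; $\gamma(G)$ is the minimum size of a dominating set, and a dominating set of size $\gamma(G)$ is a $\gamma$-set. A vertex $v$ is $\gamma$-critical if $\gamma(G-v)<\gamma(G)$; $G$ is a vertex domination-critical graph (vc-graph) if every vertex of $G$ is $\gamma$-critical. $G$ is a hypo-unique domination graph (hypo-$\mathcal{UD}$ graph) if $G$ has at least two $\gamma$-sets but for every $v\in V(G)$ the graph $G-v$ has exactly one $\gamma$-set. *)

theory Defs
  imports Main
begin

definition graph :: "'a set \<Rightarrow> ('a \<Rightarrow> 'a \<Rightarrow> bool) \<Rightarrow> bool" where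
  "graph V E \<longleftrightarrow> finite V \<and>
     (\<forall>x y. E x y \<longrightarrow> x \<in> V \<and> y \<in> V \<and> x \<noteq> y \<and> E y x)"

definition dominating :: "'a set \<Rightarrow> ('a \<Rightarrow> 'a \<Rightarrow> bool) \<Rightarrow> 'a set \<Rightarrow> bool" where
  "dominating V E D \<longleftrightarrow> D \<subseteq> V \<and> (\<forall>v \<in> V - D. \<exists>u \<in> D. E v u)"

definition gamma :: "'a set \<Rightarrow> ('a \<Rightarrow> 'a \<Rightarrow> bool) \<Rightarrow> nat" where
  "gamma V E = Min {card D | D. dominating V E D}"

definition gamma_set :: "'a set \<Rightarrow> ('a \<Rightarrow> 'a \<Rightarrow> bool) \<Rightarrow> 'a set \<Rightarrow> bool" where
  "gamma_set V E D \<longleftrightarrow> dominating V E D \<and> card D = gamma V E"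

definition del_vertex_edges :: "('a \<Rightarrow> 'a \<Rightarrow> bool) \<Rightarrow> 'a \<Rightarrow> ('a \<Rightarrow> 'a \<Rightarrow> bool)" where
  "del_vertex_edges E v = (\<lambda>x y. E x y \<and> x \<noteq> v \<and> y \<noteq> v)"

definition gamma_critical :: "'a set \<Rightarrow> ('a \<Rightarrow> 'a \<Rightarrow> bool) \<Rightarrow> 'a \<Rightarrow> bool" where
  "gamma_critical V E v \<longleftrightarrow> gamma (V - {v}) (del_vertex_edges E v) < gamma V E"

definition vc_graph :: "'a set \<Rightarrow> ('a \<Rightarrow> 'a \<Rightarrow> bool) \<Rightarrow> bool" where
  "vc_graph V E \<longleftrightarrow> (\<forall>v \<in> V. gamma_critical V E v)"

definition hypo_UD :: "'a set \<Rightarrow> ('a \<Rightarrow> 'a \<Rightarrow> bool) \<Rightarrow> bool" where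
  "hypo_UD V E \<longleftrightarrow>
     (\<exists>D1 D2. D1 \<noteq> D2 \<and> gamma_set V E D1 \<and> gamma_set V E D2) \<and>
     (\<forall>v \<in> V. \<exists>!D. gamma_set (V - {v}) (del_vertex_edges E v) D)"

definition connected_graph :: "'a set \<Rightarrow> ('a \<Rightarrow> 'a \<Rightarrow> bool) \<Rightarrow> bool" where
  "connected_graph V E \<longleftrightarrow> V \<noteq> {} \<and> (\<forall>x \<in> V. \<forall>y \<in> V. E\<^sup>*\<^sup>* x y)"

definition is_K2 :: "'a set \<Rightarrow> ('a \<Rightarrow> 'a \<Rightarrow> bool) \<Rightarrow> bool" where
  "is_K2 V E \<longleftrightarrow> card V = 2 \<and> (\<forall>x \<in> V. \<forall>y \<in> V. x \<noteq> y \<longrightarrow> E x y)"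

end

theory Submission
  imports Defs
begin

text \<open>If \<open>\<gamma>(G) = 1\<close>, two distinct singleton \<open>\<gamma>\<close>-sets would both remain \<open>\<gamma>\<close>-sets of
  \<open>G - y\<close> for any third vertex \<open>y\<close>, so \<open>G = K\<^sub>2\<close>. Let \<open>\<gamma>(G) \<ge> 2\<close> and \<open>v\<close> be non-critical.
  The \<open>\<gamma>\<close>-sets avoiding \<open>v\<close> are \<open>\<gamma>\<close>-sets of \<open>G - v\<close>, so there is at most one. A critical
  neighbour of \<open>v\<close> is a leaf, so \<open>v\<close> has at most one; if \<open>v\<close> lay in two \<open>\<gamma>\<close>-sets, its
  private neighbours would be critical, and trading \<open>v\<close> for the unique one would give the
  same \<open>\<gamma>\<close>-set of \<open>G - v\<close> from both. So \<open>G\<close> has exactly two \<open>\<gamma>\<close>-sets, and they are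
  disjoint, as no vertex lies in both. Yet trading a non-critical vertex for its unique
  private neighbour turns one into the other, so they meet. Connectivity holds because
  \<open>\<gamma>\<close>-sets of \<open>G\<close> and of \<open>G - w\<close> can be exchanged on a component avoiding \<open>w\<close>, and
  \<open>|V| \<ge> 4\<close> because a graph on at most three vertices without isolated vertices has
  \<open>\<gamma> \<le> 1\<close>.\<close>

section \<open>Domination in arbitrary finite graphs\<close>

lemma finite_dominating_cards: "finite V \<Longrightarrow> finite {card D | D. dominating V E D}"
  by (rule finite_subset[of _ "{0..card V}"]) (auto simp: dominating_def intro: card_mono)

lemma gamma_le_card:
  assumes "finite V" "dominating V E D"
  shows "gamma V E \<le> card D"
  unfolding gamma_def using finite_dominating_cards[OF assms(1)] assms(2) by (auto intro: Min_le)

lemma gamma_set_exists: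
  assumes "finite V"
  shows "\<exists>D. gamma_set V E D"
proof -
  have "{card D | D. dominating V E D} \<noteq> {}"
    using dominating_def by blast
  from Min_in[OF finite_dominating_cards[OF assms] this]
  show ?thesis unfolding gamma_def gamma_set_def by auto
qed

lemma gamma_eq_0_iff:
  assumes "finite V"
  shows "gamma V E = 0 \<longleftrightarrow> V = {}"
proof
  obtain D where D: "gamma_set V E D" using gamma_set_exists[OF assms] by blast
  then have "finite D" using assms finite_subset by (auto simp: gamma_set_def dominating_def)
  moreover assume "gamma V E = 0"
  ultimately show "V = {}" using D by (auto simp: gamma_set_def dominating_def)
next
  assume "V = {}"
  then have "dominating V E {}" by (simp add: dominating_def)
  then show "gamma V E = 0" using gamma_le_card[OF assms] by fastforce
qed

lemma dominating_del_vertex: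
  "dominating V E D \<Longrightarrow> v \<notin> D \<Longrightarrow> dominating (V - {v}) (del_vertex_edges E v) D"
  unfolding dominating_def del_vertex_edges_def by blast

lemma dominating_del_vertex_edges_iff:
  "w \<notin> U \<Longrightarrow> dominating U (del_vertex_edges E w) X \<longleftrightarrow> dominating U E X"
  unfolding dominating_def del_vertex_edges_def by blast

lemma dominating_split_closed:
  assumes "\<And>a b. E a b \<Longrightarrow> a \<in> C \<longleftrightarrow> b \<in> C"
  shows "dominating V E D \<longleftrightarrow> dominating (V \<inter> C) E (D \<inter> C) \<and> dominating (V - C) E (D - C)"
  using assms unfolding dominating_def by (auto 0 3)

locale fin_graph =
  fixes V :: "'a set" and E :: "'a \<Rightarrow> 'a \<Rightarrow> bool"
  assumes graph: "graph V E"
begin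

lemma finite_V: "finite V"
  using graph by (simp add: graph_def)

lemma adj_sym: "E x y \<Longrightarrow> E y x"
  using graph by (simp add: graph_def)

lemma adj_in_V: "E x y \<Longrightarrow> x \<in> V" "E x y \<Longrightarrow> y \<in> V"
  using graph by (simp_all add: graph_def)

lemma adj_irrefl: "E x y \<Longrightarrow> x \<noteq> y"
  using graph by (simp add: graph_def)

abbreviation "\<gamma> \<equiv> gamma V E"
abbreviation "gs \<equiv> gamma_set V E"
abbreviation "dom_del v \<equiv> dominating (V - {v}) (del_vertex_edges E v)"
abbreviation "\<gamma>_del v \<equiv> gamma (V - {v}) (del_vertex_edges E v)"
abbreviation "gs_del v \<equiv> gamma_set (V - {v}) (del_vertex_edges E v)"
abbreviation "critical v \<equiv> gamma_critical V E v"

lemma gamma_le: "dominating V E D \<Longrightarrow> \<gamma> \<le> card D"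
  using gamma_le_card finite_V by blast

lemma gamma_del_le: "dom_del v D \<Longrightarrow> \<gamma>_del v \<le> card D"
  using gamma_le_card finite_V by blast

lemma gamma_set_del_exists: "\<exists>T. gs_del v T"
  using gamma_set_exists finite_V by blast

lemma gamma_set_subset: "gs D \<Longrightarrow> D \<subseteq> V"
  unfolding gamma_set_def dominating_def by blast

lemma gamma_set_finite: "gs D \<Longrightarrow> finite D"
  using gamma_set_subset finite_V finite_subset by blast

lemma gamma_set_card: "gs D \<Longrightarrow> card D = \<gamma>"
  by (simp add: gamma_set_def)

lemma gamma_le_gamma_del_Suc:
  assumes "v \<in> V"
  shows "\<gamma> \<le> \<gamma>_del v + 1"
proof -
  obtain A where A: "gs_del v A" using gamma_set_del_exists by blast
  have "dominating V E (insert v A)"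
    using A assms unfolding gamma_set_def dominating_def del_vertex_edges_def by blast
  then have "\<gamma> \<le> card (insert v A)" by (rule gamma_le)
  also have "\<dots> \<le> card A + 1" by (simp add: card_insert_le_m1)
  finally show ?thesis using A by (simp add: gamma_set_def)
qed

lemma not_critical_iff: "\<not> critical v \<longleftrightarrow> \<gamma> \<le> \<gamma>_del v"
  by (auto simp: gamma_critical_def)

lemma gamma_set_del_if_not_critical:
  "\<not> critical v \<Longrightarrow> dom_del v A \<Longrightarrow> card A = \<gamma> \<Longrightarrow> gs_del v A"
  using gamma_del_le[of v A] not_critical_iff[of v] by (simp add: gamma_set_def)

lemma gamma_set_del_if_avoiding:
  "\<not> critical v \<Longrightarrow> gs D \<Longrightarrow> v \<notin> D \<Longrightarrow> gs_del v D"
  using gamma_set_del_if_not_critical dominating_del_vertex unfolding gamma_set_def by metis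

text \<open>Criticality makes \<open>T\<close> one vertex short of a \<open>\<gamma>\<close>-set, so \<open>T\<close> cannot dominate \<open>v\<close>.\<close>

lemma critical_gamma_set_del:
  assumes "v \<in> V" "critical v" "gs_del v T"
  shows "v \<notin> T" "\<And>t. t \<in> T \<Longrightarrow> \<not> E v t"
    and "\<And>z. z = v \<or> E v z \<Longrightarrow> gs (insert z T)"
proof -
  have sub: "T \<subseteq> V - {v}" using assms(3) by (simp add: gamma_set_def dominating_def)
  have fin: "finite T" using sub finite_V finite_subset by blast
  have card_T: "card T = \<gamma> - 1" "\<gamma> \<ge> 1"
    using assms gamma_le_gamma_del_Suc[OF assms(1)] by (auto simp: gamma_set_def gamma_critical_def)
  show "v \<notin> T" using sub by blast
  show no_nbr: "\<not> E v t" if "t \<in> T" for t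
  proof
    assume "E v t"
    then have "dominating V E T" using assms(3) sub \<open>t \<in> T\<close>
      unfolding gamma_set_def dominating_def del_vertex_edges_def by blast
    then show False using gamma_le card_T by fastforce
  qed
  fix z assume z: "z = v \<or> E v z"
  then have "z \<in> V" "z \<notin> T" using assms(1) adj_in_V sub no_nbr by blast+
  moreover have "dominating V E (insert z T)"
    using assms(3) sub z \<open>z \<in> V\<close> unfolding gamma_set_def dominating_def del_vertex_edges_def by blast
  ultimately show "gs (insert z T)" using fin card_T by (simp add: gamma_set_def)
qed

lemma no_gamma_set_contains_leaf_and_support:
  assumes "gs D" "x \<in> D" "v \<in> D" "E x v" "\<And>w. E x w \<Longrightarrow> w = v"
  shows False
proof -
  have "dominating V E (D - {x})"
    using assms adj_irrefl[OF assms(4)] adj_sym unfolding gamma_set_def dominating_def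
    by (metis DiffD1 DiffD2 DiffI insertI1 singleton_iff subset_iff)
  then have "\<gamma> \<le> card (D - {x})" by (rule gamma_le)
  then show False using assms(1,2) gamma_set_card gamma_set_finite card_Diff1_less by fastforce
qed

definition private_nbr :: "'a set \<Rightarrow> 'a \<Rightarrow> 'a \<Rightarrow> bool" where
  "private_nbr D v y \<longleftrightarrow> y \<in> V - D \<and> E y v \<and> (\<forall>d\<in>D. E y d \<longrightarrow> d = v)"

lemma dominating_del_add_private_nbrs:
  assumes "dominating V E D" "X \<subseteq> V - {v}" "\<And>y. private_nbr D v y \<Longrightarrow> y \<in> X"
  shows "dom_del v (X \<union> (D - {v}))"
  unfolding dominating_def[of "V - {v}"]
proof (intro conjI ballI)
  show "X \<union> (D - {v}) \<subseteq> V - {v}" using assms(1,2) unfolding dominating_def by blast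
  fix y assume y: "y \<in> V - {v} - (X \<union> (D - {v}))"
  then have "y \<in> V - D" "\<not> private_nbr D v y" using assms(3) by blast+
  then obtain u where "u \<in> D" "E y u" "u \<noteq> v"
    using assms(1) unfolding dominating_def private_nbr_def by blast
  then show "\<exists>u\<in>X \<union> (D - {v}). del_vertex_edges E v y u"
    using y unfolding del_vertex_edges_def by blast
qed

lemma gamma_set_card_Diff:
  assumes "gs D" "v \<in> D"
  shows "card (D - {v}) = \<gamma> - 1" "\<gamma> \<ge> 1"
  using assms gamma_set_card gamma_set_finite card_gt_0_iff[of D] by auto

lemma private_nbr_exists:
  assumes "\<not> critical v" "gs D" "v \<in> D"
  shows "\<exists>x. private_nbr D v x"
proof (rule ccontr)
  assume "\<nexists>x. private_nbr D v x"
  then have "dom_del v ({} \<union> (D - {v}))"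
    using assms(2) by (intro dominating_del_add_private_nbrs) (auto simp: gamma_set_def)
  then have "\<gamma>_del v \<le> \<gamma> - 1" using gamma_del_le gamma_set_card_Diff[OF assms(2,3)] by fastforce
  then show False using assms(1) not_critical_iff gamma_set_card_Diff[OF assms(2,3)] by simp
qed

lemma gamma_set_del_swap:
  assumes "\<not> critical v" "gs D" "v \<in> D" "private_nbr D v x" "\<And>y. private_nbr D v y \<Longrightarrow> y = x"
  shows "gs_del v (insert x (D - {v}))"
proof (rule gamma_set_del_if_not_critical[OF assms(1)])
  have x: "x \<in> V" "x \<notin> D" using assms(4) unfolding private_nbr_def by blast+
  then have "{x} \<subseteq> V - {v}" using assms(3) by blast
  then have "dom_del v ({x} \<union> (D - {v}))"
    using assms(2,5) by (intro dominating_del_add_private_nbrs) (auto simp: gamma_set_def)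
  then show "dom_del v (insert x (D - {v}))" by simp
  show "card (insert x (D - {v})) = \<gamma>"
    using x(2) gamma_set_card_Diff[OF assms(2,3)] gamma_set_finite[OF assms(2)] by simp
qed

lemma gamma_le_1_if_card_le_3:
  assumes no_isolated: "\<And>a. a \<in> V \<Longrightarrow> \<exists>z. E a z" and "card V \<le> 3"
  shows "\<gamma> \<le> 1"
proof (rule ccontr)
  assume gamma: "\<not> \<gamma> \<le> 1"
  then have "V \<noteq> {}" using gamma_eq_0_iff[OF finite_V] by auto
  then obtain v u where v: "v \<in> V" and u: "E v u" using no_isolated by blast
  have "\<not> dominating V E {u}" using gamma gamma_le by fastforce
  then obtain y where y: "y \<in> V" "y \<noteq> u" "\<not> E y u"
    using adj_in_V(2)[OF u] unfolding dominating_def by blast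
  have "y \<noteq> v" "u \<noteq> v" using y(3) u adj_sym adj_irrefl by blast+
  then have "card {u, v, y} = 3" using y(2) by simp
  moreover have "{u, v, y} \<subseteq> V" using adj_in_V(2)[OF u] v y by blast
  ultimately have V: "V = {u, v, y}"
    using assms(2) by (metis card_mono[OF finite_V] card_subset_eq[OF finite_V] le_antisym)
  obtain z where z: "E y z" using no_isolated[OF y(1)] by blast
  then have "z = v" using V adj_in_V(2)[of y z] adj_irrefl y(3) by blast
  then have "dominating V E {v}" using V u z adj_sym unfolding dominating_def by blast
  then show False using gamma gamma_le by fastforce
qed

end

section \<open>Hypo-unique domination graphs\<close>

locale hypo_UD_graph = fin_graph +
  assumes hypo_UD: "hypo_UD V E"
begin

lemma two_gamma_sets:
  obtains D1 D2 where "D1 \<noteq> D2" "gs D1" "gs D2"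
  using hypo_UD by (auto simp: hypo_UD_def)

lemma gamma_set_del_unique: "v \<in> V \<Longrightarrow> gs_del v A \<Longrightarrow> gs_del v B \<Longrightarrow> A = B"
  using hypo_UD unfolding hypo_UD_def by metis

lemma gamma_pos: "\<gamma> \<ge> 1"
proof -
  obtain D1 D2 where "D1 \<noteq> D2" "gs D1" "gs D2" by (rule two_gamma_sets)
  then have "V \<noteq> {}" using gamma_set_subset by blast
  then have "\<gamma> \<noteq> 0" using gamma_eq_0_iff[OF finite_V] by blast
  then show ?thesis by simp
qed

lemma gamma_set_avoiding_unique:
  "v \<in> V \<Longrightarrow> \<not> critical v \<Longrightarrow> gs D1 \<Longrightarrow> gs D2 \<Longrightarrow> v \<notin> D1 \<Longrightarrow> v \<notin> D2 \<Longrightarrow> D1 = D2"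
  using gamma_set_del_if_avoiding gamma_set_del_unique by metis

lemma no_isolated_vertex:
  assumes "a \<in> V"
  shows "\<exists>z. E a z"
proof (rule ccontr)
  assume isolated: "\<nexists>z. E a z"
  obtain D1 D2 where D: "D1 \<noteq> D2" "gs D1" "gs D2" by (rule two_gamma_sets)
  have a_in: "a \<in> X" if "gs X" for X
    using that assms isolated unfolding gamma_set_def dominating_def by blast
  have "gs_del a (X - {a})" if "gs X" for X
  proof -
    have "dom_del a (X - {a})"
      using that isolated adj_sym unfolding gamma_set_def dominating_def del_vertex_edges_def by blast
    moreover have "card (X - {a}) = \<gamma> - 1" using that a_in gamma_set_card by simp
    ultimately show ?thesis
      using gamma_del_le[of a "X - {a}"] gamma_le_gamma_del_Suc[OF assms] by (simp add: gamma_set_def)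
  qed
  then have "D1 - {a} = D2 - {a}" using gamma_set_del_unique[OF assms] D by blast
  then show False using D a_in by blast
qed

text \<open>A neighbour \<open>w\<close> in neither set would be critical, and adding \<open>w\<close> to the \<open>\<gamma>\<close>-set of
  \<open>G - w\<close> would give a \<open>\<gamma>\<close>-set avoiding \<open>x\<close>, that is \<open>D\<close>.\<close>

lemma nbr_of_noncritical_in_gamma_set:
  assumes "x \<in> V" "\<not> critical x" "gs D" "gs D'" "x \<notin> D" "x \<in> D'" "w \<notin> D'" "E w x"
  shows "w \<in> D"
proof (rule ccontr)
  assume "w \<notin> D"
  have w: "w \<in> V" using adj_in_V(1)[OF assms(8)] .
  have "critical w"
    using gamma_set_avoiding_unique[OF w _ assms(3,4) \<open>w \<notin> D\<close> assms(7)] assms(5,6) by blast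
  obtain T where T: "gs_del w T" using gamma_set_del_exists by blast
  note T_props = critical_gamma_set_del[OF w \<open>critical w\<close> T]
  have "x \<notin> insert w T" using T_props(2) assms(8) adj_irrefl by blast
  then have "D = insert w T"
    using gamma_set_avoiding_unique[OF assms(1,2,3) T_props(3)] assms(5) by blast
  then show False using \<open>w \<notin> D\<close> by blast
qed

lemma critical_nbr_of_noncritical_is_leaf:
  assumes "v \<in> V" "\<not> critical v" "critical x" "E x v" "E x w"
  shows "w = v"
proof (rule ccontr)
  assume "w \<noteq> v"
  have x: "x \<in> V" using adj_in_V(1)[OF assms(4)] .
  obtain T where T: "gs_del x T" using gamma_set_del_exists by blast
  note T_props = critical_gamma_set_del[OF x assms(3) T]
  have "v \<notin> insert w T" "v \<notin> insert x T"
    using T_props(2) assms(4) \<open>w \<noteq> v\<close> adj_irrefl by blast+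
  then have "insert w T = insert x T"
    using gamma_set_avoiding_unique[OF assms(1,2)] T_props(3) assms(5) by blast
  then show False using T_props(2) assms(5) adj_irrefl by (metis insertE insertI1)
qed

lemma critical_nbr_of_noncritical_unique:
  assumes "v \<in> V" "\<not> critical v" "critical x" "critical y" "E x v" "E y v"
  shows "x = y"
proof (rule ccontr)
  assume "x \<noteq> y"
  have xy: "x \<in> V" "y \<in> V" using adj_in_V assms(5,6) by blast+
  obtain T where T: "gs_del x T" using gamma_set_del_exists by blast
  obtain T' where T': "gs_del y T'" using gamma_set_del_exists by blast
  note T_props = critical_gamma_set_del[OF xy(1) assms(3) T]
  note T'_props = critical_gamma_set_del[OF xy(2) assms(4) T']
  have gs_T: "gs (insert x T)" "gs (insert v T)" "gs (insert y T')"
    using T_props(3) T'_props(3) assms(5) by blast+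
  have "v \<notin> insert x T" "v \<notin> insert y T'"
    using T_props(2) T'_props(2) assms(5,6) adj_irrefl by blast+
  then have "insert x T = insert y T'"
    using gamma_set_avoiding_unique[OF assms(1,2) gs_T(1,3)] by blast
  then have "y \<in> T" using \<open>x \<noteq> y\<close> by (metis insertE insertI1)
  have leaf: "\<And>w. E y w \<Longrightarrow> w = v"
    using critical_nbr_of_noncritical_is_leaf[OF assms(1,2,4,6)] .
  show False
    using no_gamma_set_contains_leaf_and_support[OF gs_T(2) _ _ assms(6) leaf] \<open>y \<in> T\<close> by blast
qed

lemma noncritical_private_nbr:
  assumes "\<not> critical x" "gs D" "gs D'" "D \<noteq> D'" "private_nbr D v x"
  shows "x \<in> D'" and "private_nbr D' x w \<Longrightarrow> w = v"
proof -
  have x: "x \<in> V" "x \<notin> D" "E x v" "\<forall>d\<in>D. E x d \<longrightarrow> d = v"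
    using assms(5) unfolding private_nbr_def by blast+
  show "x \<in> D'" using gamma_set_avoiding_unique[OF x(1) assms(1-3) x(2)] assms(4) by blast
  assume "private_nbr D' x w"
  then have "w \<notin> D'" "E w x" unfolding private_nbr_def by blast+
  then have "w \<in> D"
    using nbr_of_noncritical_in_gamma_set[OF x(1) assms(1-3) x(2) \<open>x \<in> D'\<close>] by blast
  then show "w = v" using x(4) adj_sym \<open>E w x\<close> by blast
qed

lemma private_nbr_critical:
  assumes "gs D" "gs D'" "D \<noteq> D'" "v \<in> D'" "private_nbr D v x"
  shows "critical x"
proof (rule ccontr)
  assume "\<not> critical x"
  note x = noncritical_private_nbr[OF this assms(1-3,5)]
  obtain w where "private_nbr D' x w" using private_nbr_exists \<open>\<not> critical x\<close> assms(2) x(1) by blast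
  then show False using x(2) assms(4) unfolding private_nbr_def by blast+
qed

lemma unique_private_nbr_if_critical:
  assumes "v \<in> V" "\<not> critical v" "private_nbr D v x" "\<And>y. private_nbr D v y \<Longrightarrow> critical y"
    and "private_nbr D v y"
  shows "y = x"
  using critical_nbr_of_noncritical_unique[OF assms(1,2)] assms(3-5) private_nbr_def by metis

lemma noncritical_in_one_gamma_set:
  assumes "v \<in> V" "\<not> critical v" "gs D" "gs D'" "v \<in> D" "v \<in> D'"
  shows "D = D'"
proof (rule ccontr)
  assume "D \<noteq> D'"
  obtain x where x: "private_nbr D v x" using private_nbr_exists assms(2,3,5) by blast
  have crit: "private_nbr D v y \<Longrightarrow> critical y" "private_nbr D' v y \<Longrightarrow> critical y" for y
    using private_nbr_critical assms(3-6) \<open>D \<noteq> D'\<close> by metis+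
  note unique = unique_private_nbr_if_critical[OF assms(1,2)]
  obtain x' where x': "private_nbr D' v x'" using private_nbr_exists assms(2,4,6) by blast
  have "x' = x" using critical_nbr_of_noncritical_unique[OF assms(1,2)] crit x x'
    unfolding private_nbr_def by metis
  then have "gs_del v (insert x (D - {v}))" "gs_del v (insert x (D' - {v}))"
    using gamma_set_del_swap assms(2-6) x x' unique crit by metis+
  then have "insert x (D - {v}) = insert x (D' - {v})" using gamma_set_del_unique[OF assms(1)] by blast
  moreover have "x \<notin> D" "x \<notin> D'" using x x' \<open>x' = x\<close> unfolding private_nbr_def by blast+
  ultimately have "D - {v} = D' - {v}" by (metis Diff_iff insert_ident)
  then show False using \<open>D \<noteq> D'\<close> assms(5,6) by blast
qed

lemma noncritical_gamma_sets:
  assumes "v \<in> V" "\<not> critical v"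
  obtains D S where "gs D" "gs S" "v \<in> D" "v \<notin> S" "\<And>X. gs X \<Longrightarrow> X = D \<or> X = S"
proof -
  obtain D1 D2 where D12: "D1 \<noteq> D2" "gs D1" "gs D2" by (rule two_gamma_sets)
  have same: "X = Y" if "gs X" "gs Y" "v \<in> X \<longleftrightarrow> v \<in> Y" for X Y
    using that noncritical_in_one_gamma_set[OF assms] gamma_set_avoiding_unique[OF assms] by blast
  then have split: "v \<in> D1 \<longleftrightarrow> v \<notin> D2" using D12 by blast
  have all: "X = D1 \<or> X = D2" if "gs X" for X
    using same[OF that D12(2)] same[OF that D12(3)] split by blast
  show ?thesis
  proof (cases "v \<in> D1")
    case True
    then show ?thesis using that[OF D12(2,3)] split all by blast
  next
    case False
    then show ?thesis using that[OF D12(3,2)] split all by blast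
  qed
qed

lemma only_two_gamma_sets_disjoint:
  assumes "gs D" "gs S" "D \<noteq> S" "\<And>X. gs X \<Longrightarrow> X = D \<or> X = S"
  shows "D \<inter> S = {}"
proof (rule ccontr)
  assume "D \<inter> S \<noteq> {}"
  then obtain a where a: "a \<in> D" "a \<in> S" "a \<in> V" using gamma_set_subset[OF assms(1)] by blast
  have "critical a" using noncritical_in_one_gamma_set[OF a(3) _ assms(1,2) a(1,2)] assms(3) by blast
  obtain T where T: "gs_del a T" using gamma_set_del_exists by blast
  obtain z where "E a z" using no_isolated_vertex[OF a(3)] by blast
  note T_props = critical_gamma_set_del[OF a(3) \<open>critical a\<close> T]
  have "gs (insert z T)" "a \<notin> insert z T"
    using T_props(1,3) \<open>E a z\<close> adj_irrefl by blast+
  then show False using assms(4) a(1,2) by blast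
qed

lemma swapped_gamma_sets_meet:
  assumes "u \<in> V" "\<not> critical u" "gs A" "u \<in> A" "private_nbr A u x"
    and "\<And>y. private_nbr A u y \<Longrightarrow> y = x" "gs B" "u \<notin> B" "\<gamma> \<ge> 2"
  shows "A \<inter> B \<noteq> {}"
proof -
  have "card (A - {u}) \<noteq> 0" using gamma_set_card_Diff[OF assms(3,4)] assms(9) by simp
  then have "A - {u} \<noteq> {}" by (metis card.empty)
  moreover have "B = insert x (A - {u})"
    using gamma_set_del_unique[OF assms(1) gamma_set_del_if_avoiding[OF assms(2,7,8)]
        gamma_set_del_swap[OF assms(2-6)]] .
  ultimately show ?thesis by blast
qed

lemma critical_if_gamma_ge_2:
  assumes "v \<in> V" "\<gamma> \<ge> 2"
  shows "critical v"
proof (rule ccontr)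
  assume "\<not> critical v"
  obtain D S where DS: "gs D" "gs S" "v \<in> D" "v \<notin> S" "\<And>X. gs X \<Longrightarrow> X = D \<or> X = S"
    using noncritical_gamma_sets[OF assms(1) \<open>\<not> critical v\<close>] by metis
  have "D \<noteq> S" using DS(3,4) by blast
  have disjoint: "D \<inter> S = {}" using only_two_gamma_sets_disjoint DS(1,2,5) \<open>D \<noteq> S\<close> by blast
  show False
  proof (cases "\<exists>y. private_nbr D v y \<and> \<not> critical y")
    case True
    then obtain y where y: "private_nbr D v y" "\<not> critical y" by blast
    note y_in_S = noncritical_private_nbr[OF y(2) DS(1,2) \<open>D \<noteq> S\<close> y(1)]
    have "y \<in> V" "y \<notin> D" using y(1) unfolding private_nbr_def by blast+
    obtain w where "private_nbr S y w" using private_nbr_exists y(2) DS(2) y_in_S(1) by blast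
    then have "private_nbr S y v" using y_in_S(2) by blast
    then show False
      using swapped_gamma_sets_meet[OF \<open>y \<in> V\<close> y(2) DS(2) y_in_S(1) _ y_in_S(2) DS(1) \<open>y \<notin> D\<close> assms(2)]
        disjoint by blast
  next
    case False
    obtain x where x: "private_nbr D v x" using private_nbr_exists \<open>\<not> critical v\<close> DS(1,3) by blast
    have "\<And>y. private_nbr D v y \<Longrightarrow> y = x"
      using unique_private_nbr_if_critical[OF assms(1) \<open>\<not> critical v\<close> x] False by blast
    then show False
      using swapped_gamma_sets_meet[OF assms(1) \<open>\<not> critical v\<close> DS(1,3) x _ DS(2,4) assms(2)]
        disjoint by blast
  qed
qed

text \<open>Exchanging the parts of \<open>D\<close> and \<open>T\<close> inside \<open>C\<close> gives dominating sets of \<open>G - w\<close> and of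
  \<open>G\<close> whose sizes add up to \<open>\<gamma>(G - w) + \<gamma>(G)\<close>; so both are minimum, and uniqueness in
  \<open>G - w\<close> pins down \<open>D \<inter> C\<close>.\<close>

lemma gamma_sets_agree_on_closed:
  assumes closed: "\<And>a b. E a b \<Longrightarrow> a \<in> C \<longleftrightarrow> b \<in> C" and w: "w \<in> V" "w \<notin> C"
    and D: "gs D" and T: "gs_del w T"
  shows "D \<inter> C = T \<inter> C"
proof -
  define A where "A = (T - C) \<union> (D \<inter> C)"
  define B where "B = (D - C) \<union> (T \<inter> C)"
  have closed_del: "\<And>a b. del_vertex_edges E w a b \<Longrightarrow> a \<in> C \<longleftrightarrow> b \<in> C"
    using closed unfolding del_vertex_edges_def by blast
  have VC: "(V - {w}) \<inter> C = V \<inter> C" "w \<notin> V \<inter> C" using w by blast+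
  have "dominating V E D" using D by (simp add: gamma_set_def)
  then have D_split: "dominating (V \<inter> C) E (D \<inter> C)" "dominating (V - C) E (D - C)"
    using dominating_split_closed[OF closed, where V=V and D=D] by blast+
  have "dom_del w T" using T by (simp add: gamma_set_def)
  then have T_split: "dominating ((V - {w}) \<inter> C) (del_vertex_edges E w) (T \<inter> C)"
      "dominating (V - {w} - C) (del_vertex_edges E w) (T - C)"
    using dominating_split_closed[OF closed_del, where V="V - {w}" and D=T] by blast+
  have parts: "A \<inter> C = D \<inter> C" "A - C = T - C" "B \<inter> C = T \<inter> C" "B - C = D - C"
    by (auto simp: A_def B_def)
  have "dominating ((V - {w}) \<inter> C) (del_vertex_edges E w) (A \<inter> C)"
    using D_split(1) dominating_del_vertex_edges_iff[OF VC(2)] by (simp add: parts VC(1))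
  moreover have "dominating (V - {w} - C) (del_vertex_edges E w) (A - C)"
    using T_split(2) by (simp add: parts)
  ultimately have dom_A: "dom_del w A"
    using dominating_split_closed[OF closed_del, where V="V - {w}" and D=A] by blast
  have "dominating (V \<inter> C) E (B \<inter> C)"
    using T_split(1) dominating_del_vertex_edges_iff[OF VC(2)] by (simp add: parts VC(1))
  moreover have "dominating (V - C) E (B - C)"
    using D_split(2) by (simp add: parts)
  ultimately have dom_B: "dominating V E B"
    using dominating_split_closed[OF closed, where V=V and D=B] by blast
  have fin: "finite T" "finite D"
    using T D gamma_set_finite finite_V finite_subset by (auto simp: gamma_set_def dominating_def)
  have "card A = card (T - C) + card (D \<inter> C)"
    unfolding A_def using fin by (intro card_Un_disjoint) auto
  moreover have "card B = card (D - C) + card (T \<inter> C)"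
    unfolding B_def using fin by (intro card_Un_disjoint) auto
  moreover have "card T = card (T \<inter> C) + card (T - C)" "card D = card (D \<inter> C) + card (D - C)"
    using card_Int_Diff fin by blast+
  moreover have "\<gamma>_del w \<le> card A" "\<gamma> \<le> card B"
    using gamma_del_le[OF dom_A] gamma_le[OF dom_B] .
  ultimately have "card A = \<gamma>_del w"
    using T D gamma_set_card by (auto simp: gamma_set_def)
  then have "A = T"
    using gamma_set_del_unique[OF w(1) _ T] dom_A by (simp add: gamma_set_def)
  then show ?thesis using parts(1) by simp
qed

lemma connected: "connected_graph V E"
  unfolding connected_graph_def
proof (intro conjI ballI)
  obtain D1 D2 where D12: "D1 \<noteq> D2" "gs D1" "gs D2" by (rule two_gamma_sets)
  show "V \<noteq> {}" using gamma_pos gamma_eq_0_iff[OF finite_V, of E] by simp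
  fix x y assume xy: "x \<in> V" "y \<in> V"
  show "E\<^sup>*\<^sup>* x y"
  proof (rule ccontr)
    assume "\<not> E\<^sup>*\<^sup>* x y"
    define C where "C = {z. E\<^sup>*\<^sup>* x z}"
    have closed: "a \<in> C \<longleftrightarrow> b \<in> C" if "E a b" for a b
      using that adj_sym rtranclp.rtrancl_into_rtrancl unfolding C_def by (metis mem_Collect_eq)
    then have closed_compl: "a \<in> - C \<longleftrightarrow> b \<in> - C" if "E a b" for a b using that by blast
    have "y \<notin> C" "x \<notin> - C" using \<open>\<not> E\<^sup>*\<^sup>* x y\<close> unfolding C_def by auto
    obtain T where T: "gs_del y T" using gamma_set_del_exists by blast
    obtain T' where T': "gs_del x T'" using gamma_set_del_exists by blast
    have "D1 \<inter> C = D2 \<inter> C"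
      using gamma_sets_agree_on_closed[OF closed xy(2) \<open>y \<notin> C\<close> _ T] D12 by metis
    moreover have "D1 \<inter> - C = D2 \<inter> - C"
      using gamma_sets_agree_on_closed[OF closed_compl xy(1) \<open>x \<notin> - C\<close> _ T'] D12 by metis
    ultimately show False using D12(1) by blast
  qed
qed

lemma is_K2_if_gamma_eq_1:
  assumes "\<gamma> = 1"
  shows "is_K2 V E"
proof -
  obtain D1 D2 where D12: "D1 \<noteq> D2" "gs D1" "gs D2" by (rule two_gamma_sets)
  then have "card D1 = Suc 0" "card D2 = Suc 0" using gamma_set_card assms by auto
  then obtain a b where ab: "D1 = {a}" "D2 = {b}" using card_1_singleton_iff by metis
  have "a \<noteq> b" "a \<in> V" "b \<in> V" using D12 ab gamma_set_subset by auto
  have gs_del_singleton: "gs_del y {c}" if y: "y \<in> V - {a, b}" and c: "c \<in> {a, b}" for y c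
  proof -
    have "dominating V E {c}" using c D12(2,3) ab unfolding gamma_set_def by blast
    then have dom: "dom_del y {c}" by (rule dominating_del_vertex) (use y c in blast)
    have "V - {y} \<noteq> {}" using y \<open>a \<in> V\<close> by blast
    then have "\<gamma>_del y \<noteq> 0" using gamma_eq_0_iff[of "V - {y}"] finite_V by simp
    then show ?thesis using gamma_del_le[OF dom] dom by (simp add: gamma_set_def le_Suc_eq)
  qed
  have "V - {a, b} = {}"
  proof (rule ccontr)
    assume "V - {a, b} \<noteq> {}"
    then obtain y where y: "y \<in> V - {a, b}" by blast
    then have "{a} = {b}"
      using gamma_set_del_unique gs_del_singleton[OF y, of a] gs_del_singleton[OF y, of b] by blast
    then show False using \<open>a \<noteq> b\<close> by simp
  qed
  then have V: "V = {a, b}" using \<open>a \<in> V\<close> \<open>b \<in> V\<close> by blast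
  have "E b a" using D12(2) ab \<open>a \<noteq> b\<close> \<open>b \<in> V\<close> unfolding gamma_set_def dominating_def by blast
  then show ?thesis unfolding is_K2_def using V \<open>a \<noteq> b\<close> adj_sym by auto
qed

end

theorem theorem3p1:
  fixes V :: "'a set" and E :: "'a \<Rightarrow> 'a \<Rightarrow> bool"
  assumes "graph V E"
    and "hypo_UD V E"
  shows "is_K2 V E \<or> (connected_graph V E \<and> vc_graph V E \<and> card V \<ge> 4)"
proof -
  interpret hypo_UD_graph V E using assms by unfold_locales
  show ?thesis
  proof (cases "gamma V E = 1")
    case True
    then show ?thesis using is_K2_if_gamma_eq_1 by blast
  next
    case False
    then have "gamma V E \<ge> 2" using gamma_pos by simp
    then have "vc_graph V E"
      using critical_if_gamma_ge_2 by (simp add: vc_graph_def)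
    moreover have "card V \<ge> 4"
      using gamma_le_1_if_card_le_3[OF no_isolated_vertex] \<open>gamma V E \<ge> 2\<close> by fastforce
    ultimately show ?thesis using connected by blast
  qed
qed

end
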